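(* Let $d\ge2$, $N\ge1$, $\boldsymbol{\alpha}=(\alpha_1,\dots,\alpha_d)$ with all $\alpha_i>0$, and $s$ an integer with $0\le s\le N$. Each of the Pólya level model, the Pólya down-up model and the Pólya up-down model with these parameters is a Markov chain on $\mathcal{X}_N^d$ that is reversible with respect to the Dirichlet-multinomial distribution $\mathcal{DM}(\cdot\mid N,\boldsymbol{\alpha})$.
   Context: $\mathcal{X}_N^d=\{\mathbf{x}\in\mathbb{N}_0^d:|\mathbf{x}|=N\}$, where $|\mathbf{x}|=\sum_i x_i$. Rising factorial: $a_{(k)}=a(a+1)\cdots(a+k-1)$, $a_{(0)}=1$. The Dirichlet-multinomial distribution is $\mathcal{DM}(\mathbf{x}\mid N,\boldsymbol{\alpha})=\frac{N!}{x_1!\cdots x_d!}\frac{\prod_{i=1}^d(\alpha_i)_{(x_i)}}{|\boldsymbol{\alpha}|_{(N)}}$ for $\mathbf{x}\in\mathcal{X}_N^d$, where $|\boldsymbol{\alpha}|=\sum_i\alpha_i$. Pólya urn models: an urn contains $d$ special balls, the $i$-th of color $i$ and weight $\alpha_i$, together with $N$ ordinary balls, each of unit weight and of one of the colors $1,\dots,d$. A Pólya draw consists of choosing a ball from the urn (special or ordinary) with probability proportional to its weight, and returning it together with one new ordinary ball (unit weight) of the same color. One step of the Pólya level model: mark $s$ of the $N$ ordinary balls uniformly at random (without replacement); perform $s$ successive Pólya draws (the marked balls stay in the urn during the draws); then remove the $s$ marked balls. One step of the Pólya down-up model: remove $s$ ordinary balls chosen uniformly at random among the $N$ ordinary balls,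 then perform $s$ successive Pólya draws. One step of the Pólya up-down model: perform $s$ successive Pólya draws, then remove $s$ ordinary balls chosen uniformly at random among the $N+s$ ordinary balls. In all three models the state $\mathbf{X}_t\in\mathcal{X}_N^d$ is the vector of color counts of the $N$ ordinary balls after $t$ steps. *)

theory Defs
  imports "HOL-Probability.Probability"
begin

text \<open>Colors are the elements of a finite type 'c (d = CARD('c)).
  A state is a vector of color counts 'c => nat.\<close>

definition XN :: "nat \<Rightarrow> ('c::finite \<Rightarrow> nat) set" where
  "XN N = {x. (\<Sum>i\<in>UNIV. x i) = N}"

definition DM :: "nat \<Rightarrow> ('c::finite \<Rightarrow> real) \<Rightarrow> ('c \<Rightarrow> nat) \<Rightarrow> real" where
  "DM N \<alpha> x = (if x \<in> XN N then
      fact N / (\<Prod>i\<in>UNIV. fact (x i))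
      * (\<Prod>i\<in>UNIV. pochhammer (\<alpha> i) (x i)) / pochhammer (\<Sum>i\<in>UNIV. \<alpha> i) N
    else 0)"

definition balls :: "('c \<Rightarrow> nat) \<Rightarrow> ('c \<times> nat) set" where
  "balls x = {(c, k). k < x c}"

definition counts_of :: "('c \<times> nat) set \<Rightarrow> 'c \<Rightarrow> nat" where
  "counts_of S c = card {k. (c, k) \<in> S}"

definition choose_balls :: "nat \<Rightarrow> ('c \<Rightarrow> nat) \<Rightarrow> ('c \<Rightarrow> nat) pmf" where
  "choose_balls s x = map_pmf counts_of (pmf_of_set {S. S \<subseteq> balls x \<and> card S = s})"

definition remove_balls :: "nat \<Rightarrow> ('c \<Rightarrow> nat) \<Rightarrow> ('c \<Rightarrow> nat) pmf" where
  "remove_balls s x = map_pmf (\<lambda>m c. x c - m c) (choose_balls s x)"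

text \<open>One Polya draw: the chosen ball has color c with probability proportional to the
  total weight of color-c balls, alpha c (special ball) plus y c (ordinary balls);
  one new ordinary ball of that color is added.\<close>
definition polya_draw :: "('c::finite \<Rightarrow> real) \<Rightarrow> ('c \<Rightarrow> nat) \<Rightarrow> ('c \<Rightarrow> nat) pmf" where
  "polya_draw \<alpha> y = map_pmf (\<lambda>c. y(c := y c + 1))
     (embed_pmf (\<lambda>c. (\<alpha> c + real (y c)) / ((\<Sum>i\<in>UNIV. \<alpha> i) + real (\<Sum>i\<in>UNIV. y i))))"

fun polya_draws :: "('c::finite \<Rightarrow> real) \<Rightarrow> nat \<Rightarrow> ('c \<Rightarrow> nat) \<Rightarrow> ('c \<Rightarrow> nat) pmf" where
  "polya_draws \<alpha> 0 y = return_pmf y"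
| "polya_draws \<alpha> (Suc n) y = bind_pmf (polya_draws \<alpha> n y) (polya_draw \<alpha>)"

text \<open>One step of the Polya level model: mark s balls, do s draws (marked balls stay),
  then remove the marked balls.\<close>
definition level_step :: "('c::finite \<Rightarrow> real) \<Rightarrow> nat \<Rightarrow> ('c \<Rightarrow> nat) \<Rightarrow> ('c \<Rightarrow> nat) pmf" where
  "level_step \<alpha> s x = bind_pmf (choose_balls s x)
     (\<lambda>m. map_pmf (\<lambda>z c. z c - m c) (polya_draws \<alpha> s x))"

definition down_up_step :: "('c::finite \<Rightarrow> real) \<Rightarrow> nat \<Rightarrow> ('c \<Rightarrow> nat) \<Rightarrow> ('c \<Rightarrow> nat) pmf" where
  "down_up_step \<alpha> s x = bind_pmf (remove_balls s x) (polya_draws \<alpha> s)"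

definition up_down_step :: "('c::finite \<Rightarrow> real) \<Rightarrow> nat \<Rightarrow> ('c \<Rightarrow> nat) \<Rightarrow> ('c \<Rightarrow> nat) pmf" where
  "up_down_step \<alpha> s x = bind_pmf (polya_draws \<alpha> s x) (remove_balls s)"

definition reversible_chain_on :: "'a set \<Rightarrow> ('a \<Rightarrow> 'a pmf) \<Rightarrow> ('a \<Rightarrow> real) \<Rightarrow> bool" where
  "reversible_chain_on S K \<pi> \<longleftrightarrow>
     (\<forall>x\<in>S. set_pmf (K x) \<subseteq> S) \<and>
     (\<forall>x\<in>S. \<forall>y\<in>S. \<pi> x * pmf (K x) y = \<pi> y * pmf (K y) x)"

end

(*
  Each kernel is a finite sum over an intermediate urn: the counts after the draws (level and
  up-down models) or after the removal (down-up model). Marking or removing s balls is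
  multivariate hypergeometric, and s Polya draws take y to z >= y with probability
    s! / (|alpha| + |y|)_s  *  prod_c (alpha_c + y_c)_(z_c - y_c) / (z_c - y_c)!
  (rising factorials). After multiplying by DM(x), every summand factorises over the colours,
  and the identity  (a)_k / k! * (a + k)_(n - k) / (n - k)!  =  (a)_n / n! * C(n, k)  makes each
  colour factor symmetric in x and y: it becomes (a)_z / z! times C(z,x) C(z,y) for the up-down
  model and C(z,x) C(x,z-y) = z! / ((z-x)! (z-y)! (x+y-z)!) for the level model, and for the
  down-up model the product of the two increments out of the common intermediate state r.
  So detailed balance holds summand by summand.
*)
theory Submission
  imports Defs
begin

lemma pmf_bind_sum:
  assumes "finite A" "set_pmf p \<subseteq> A"
  shows "pmf (bind_pmf p f) y = (\<Sum>x\<in>A. pmf p x * pmf (f x) y)"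
  unfolding pmf_bind
  by (subst integral_measure_pmf_real[OF assms(1)]) (use assms(2) in \<open>auto simp: mult.commute\<close>)

lemma fun_diff_eq_iff:
  fixes m z :: "'a \<Rightarrow> nat"
  assumes "m \<le> z"
  shows "(\<lambda>c. z c - m c) = y \<longleftrightarrow> y \<le> z \<and> m = (\<lambda>c. z c - y c)"
proof
  assume "(\<lambda>c. z c - m c) = y"
  then show "y \<le> z \<and> m = (\<lambda>c. z c - y c)"
    using assms by (auto simp: le_fun_def)
next
  assume "y \<le> z \<and> m = (\<lambda>c. z c - y c)"
  then show "(\<lambda>c. z c - m c) = y"
    by (auto simp: le_fun_def fun_eq_iff)
qed

lemma pmf_map_diff:
  fixes z :: "'a \<Rightarrow> nat"
  assumes "\<And>m. m \<in> set_pmf p \<Longrightarrow> m \<le> z"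
  shows "pmf (map_pmf (\<lambda>m c. z c - m c) p) y = (if y \<le> z then pmf p (\<lambda>c. z c - y c) else 0)"
proof -
  have "(\<lambda>m c. z c - m c) -` {y} \<inter> set_pmf p = (if y \<le> z then {\<lambda>c. z c - y c} else {}) \<inter> set_pmf p"
    using assms fun_diff_eq_iff[of _ z y] by auto
  then have "pmf (map_pmf (\<lambda>m c. z c - m c) p) y
      = measure p ((if y \<le> z then {\<lambda>c. z c - y c} else {}) \<inter> set_pmf p)"
    by (metis measure_Int_set_pmf pmf_map)
  then show ?thesis
    by (simp add: measure_Int_set_pmf measure_pmf_single)
qed

lemma reversible_chain_onI:
  assumes pmf_K: "\<And>x y. x \<in> S \<Longrightarrow> pmf (K x) y = (\<Sum>z\<in>Z. F x y z)"
    and closed: "\<And>x y z. x \<in> S \<Longrightarrow> F x y z \<noteq> 0 \<Longrightarrow> y \<in> S"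
    and balance: "\<And>x y z. x \<in> S \<Longrightarrow> y \<in> S \<Longrightarrow> \<pi> x * F x y z = \<pi> y * F y x z"
  shows "reversible_chain_on S K \<pi>"
  unfolding reversible_chain_on_def
proof safe
  fix x y assume "x \<in> S" "y \<in> set_pmf (K x)"
  then have "(\<Sum>z\<in>Z. F x y z) \<noteq> 0" by (simp add: set_pmf_eq pmf_K)
  then obtain z where "F x y z \<noteq> 0" by (meson sum.neutral)
  with \<open>x \<in> S\<close> show "y \<in> S" by (rule closed)
next
  fix x y assume "x \<in> S" "y \<in> S"
  then show "\<pi> x * pmf (K x) y = \<pi> y * pmf (K y) x"
    by (simp add: pmf_K sum_distrib_left balance)
qed

lemma XN_iff: "x \<in> XN N \<longleftrightarrow> sum x UNIV = N"
  by (simp add: XN_def)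

lemma finite_XN: "finite (XN N :: ('c::finite \<Rightarrow> nat) set)"
proof (rule finite_subset)
  show "XN N \<subseteq> Pi\<^sub>E (UNIV :: 'c set) (\<lambda>_. {..N})"
    by (auto simp: XN_def PiE_UNIV_domain intro: member_le_sum[of _ UNIV, simplified])
qed (simp add: finite_PiE)

lemma sum_fun_upd:
  fixes z :: "'c::finite \<Rightarrow> 'a::comm_monoid_add"
  shows "sum (z(c := v)) UNIV + z c = sum z UNIV + v"
proof -
  have "sum (z(c := v)) UNIV = v + sum z (UNIV - {c})"
    by (simp add: sum.remove[of UNIV c])
  moreover have "sum z UNIV = z c + sum z (UNIV - {c})"
    by (simp add: sum.remove[of UNIV c])
  ultimately show ?thesis by (simp add: ac_simps)
qed

lemma fun_upd_Suc_eq_iff: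
  "w(c := Suc (w c)) = z \<longleftrightarrow> 1 \<le> z c \<and> w = z(c := z c - 1)"
  by (auto simp: fun_eq_iff)

lemma sum_diff_fun:
  fixes y z :: "'c::finite \<Rightarrow> nat"
  assumes "y \<le> z"
  shows "sum (\<lambda>c. z c - y c) UNIV = sum z UNIV - sum y UNIV"
  by (rule sum_subtractf_nat) (use assms in \<open>auto simp: le_fun_def\<close>)

lemma eq_if_le_and_sum_eq:
  fixes y z :: "'c::finite \<Rightarrow> nat"
  assumes "y \<le> z" and "sum z UNIV = sum y UNIV"
  shows "z = y"
proof -
  have "sum (\<lambda>c. z c - y c) UNIV = 0"
    using assms by (simp add: sum_diff_fun)
  with assms(1) show ?thesis
    by (auto simp: fun_eq_iff le_fun_def intro: antisym)
qed

definition hypergeom_prob :: "nat \<Rightarrow> ('c::finite \<Rightarrow> nat) \<Rightarrow> ('c \<Rightarrow> nat) \<Rightarrow> real" where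
  "hypergeom_prob s x m = (if m \<le> x \<and> sum m UNIV = s then
     (\<Prod>c\<in>UNIV. real (x c choose m c)) / real (sum x UNIV choose s) else 0)"

lemma hypergeom_prob_nonzeroD:
  "hypergeom_prob s x m \<noteq> 0 \<Longrightarrow> m \<le> x \<and> sum m UNIV = s"
  by (auto simp: hypergeom_prob_def split: if_splits)

lemma balls_eq_Sigma: "balls x = Sigma UNIV (\<lambda>c. {..<x c})"
  by (auto simp: balls_def)

lemma finite_balls: "finite (balls (x :: 'c::finite \<Rightarrow> nat))"
  by (simp add: balls_eq_Sigma)

lemma card_balls: "card (balls (x :: 'c::finite \<Rightarrow> nat)) = sum x UNIV"
  by (simp add: balls_eq_Sigma)

lemma card_eq_sum_counts_of:
  assumes "S \<subseteq> balls (x :: 'c::finite \<Rightarrow> nat)"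
  shows "card S = sum (counts_of S) UNIV"
proof -
  have "finite {k. (c, k) \<in> S}" for c
    by (rule finite_subset[of _ "{..<x c}"]) (use assms in \<open>auto simp: balls_def\<close>)
  moreover have "S = Sigma UNIV (\<lambda>c. {k. (c, k) \<in> S})"
    by auto
  ultimately show ?thesis
    unfolding counts_of_def by (metis card_SigmaI finite)
qed

lemma card_subsets_with_counts:
  fixes x m :: "'c::finite \<Rightarrow> nat"
  shows "card {S. S \<subseteq> balls x \<and> counts_of S = m} = (\<Prod>c\<in>UNIV. x c choose m c)"
proof -
  let ?P = "Pi\<^sub>E (UNIV :: 'c set) (\<lambda>c. {T. T \<subseteq> {..<x c} \<and> card T = m c})"
  have "{S. S \<subseteq> balls x \<and> counts_of S = m} = (\<lambda>G. Sigma UNIV G) ` ?P"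
  proof (intro equalityI subsetI)
    fix S assume S: "S \<in> {S. S \<subseteq> balls x \<and> counts_of S = m}"
    then have "S = Sigma UNIV (\<lambda>c. {k. (c, k) \<in> S})" by auto
    moreover have "(\<lambda>c. {k. (c, k) \<in> S}) \<in> ?P"
      using S by (auto simp: balls_def counts_of_def PiE_UNIV_domain)
    ultimately show "S \<in> (\<lambda>G. Sigma UNIV G) ` ?P" by blast
  next
    fix S assume "S \<in> (\<lambda>G. Sigma UNIV G) ` ?P"
    then obtain G where G: "G \<in> ?P" "S = Sigma UNIV G" by blast
    have "{k. (c, k) \<in> Sigma UNIV G} = G c" for c by auto
    then show "S \<in> {S. S \<subseteq> balls x \<and> counts_of S = m}"
      using G by (auto simp: balls_def counts_of_def PiE_UNIV_domain fun_eq_iff)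
  qed
  moreover have "inj_on (\<lambda>G. Sigma UNIV G) ?P"
  proof (rule inj_onI)
    fix G H assume "Sigma UNIV G = Sigma UNIV H"
    then have "{k. (c, k) \<in> Sigma UNIV G} = {k. (c, k) \<in> Sigma UNIV H}" for c by simp
    then show "G = H" by (auto simp: fun_eq_iff)
  qed
  ultimately have "card {S. S \<subseteq> balls x \<and> counts_of S = m} = card ?P"
    by (simp add: card_image)
  also have "\<dots> = (\<Prod>c\<in>UNIV. x c choose m c)"
    by (simp add: card_PiE n_subsets)
  finally show ?thesis .
qed

lemma pmf_choose_balls:
  fixes x m :: "'c::finite \<Rightarrow> nat"
  assumes "s \<le> sum x UNIV"
  shows "pmf (choose_balls s x) m = hypergeom_prob s x m"
proof -
  let ?A = "{S. S \<subseteq> balls x \<and> card S = s}"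
  have fin: "finite ?A"
    using finite_balls[of x] by simp
  have ne: "?A \<noteq> {}"
    using assms card_balls[of x] obtain_subset_with_card_n by (metis (mono_tags, lifting) empty_Collect_eq)
  have "pmf (choose_balls s x) m = card (?A \<inter> counts_of -` {m}) / card ?A"
    unfolding choose_balls_def pmf_map measure_pmf_of_set[OF ne fin] ..
  also have "?A \<inter> counts_of -` {m}
      = (if sum m UNIV = s then {S. S \<subseteq> balls x \<and> counts_of S = m} else {})"
    using card_eq_sum_counts_of by auto
  also have "card ?A = sum x UNIV choose s"
    using n_subsets[OF finite_balls[of x], of s] card_balls[of x] by simp
  also have "{S. S \<subseteq> balls x \<and> counts_of S = m} = {}" if "\<not> m \<le> x"
  proof -
    obtain c where c: "x c < m c"
      using \<open>\<not> m \<le> x\<close> by (auto simp: le_fun_def not_le)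
    have "counts_of S c \<le> x c" if "S \<subseteq> balls x" for S
      unfolding counts_of_def using card_mono[of "{..<x c}" "{k. (c, k) \<in> S}"] that
      by (auto simp: balls_def)
    with c show ?thesis
      by (auto dest!: spec[of _ c] simp: not_le[symmetric])
  qed
  ultimately show ?thesis
    by (auto simp: hypergeom_prob_def card_subsets_with_counts le_fun_def not_le)
qed

lemma set_pmf_choose_balls:
  fixes x :: "'c::finite \<Rightarrow> nat"
  assumes "s \<le> sum x UNIV"
  shows "set_pmf (choose_balls s x) \<subseteq> {m. m \<le> x \<and> sum m UNIV = s}"
  using hypergeom_prob_nonzeroD by (auto simp: set_pmf_eq pmf_choose_balls[OF assms])

lemma pmf_remove_balls:
  fixes x :: "'c::finite \<Rightarrow> nat"
  assumes "s \<le> sum x UNIV"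
  shows "pmf (remove_balls s x) r = (if r \<le> x then hypergeom_prob s x (\<lambda>c. x c - r c) else 0)"
  unfolding remove_balls_def
  using set_pmf_choose_balls[OF assms] by (subst pmf_map_diff) (auto simp: pmf_choose_balls[OF assms])

lemma set_pmf_remove_balls:
  fixes x :: "'c::finite \<Rightarrow> nat"
  assumes "s \<le> sum x UNIV"
  shows "set_pmf (remove_balls s x) \<subseteq> XN (sum x UNIV - s)"
proof
  fix r assume "r \<in> set_pmf (remove_balls s x)"
  then have "r \<le> x" and "sum (\<lambda>c. x c - r c) UNIV = s"
    using hypergeom_prob_nonzeroD by (auto simp: set_pmf_eq pmf_remove_balls[OF assms] split: if_splits)
  then show "r \<in> XN (sum x UNIV - s)"
    by (simp add: XN_iff sum_diff_fun) (metis le_fun_def sum_mono diff_diff_cancel)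
qed

definition polya_prob :: "('c::finite \<Rightarrow> real) \<Rightarrow> nat \<Rightarrow> ('c \<Rightarrow> nat) \<Rightarrow> ('c \<Rightarrow> nat) \<Rightarrow> real" where
  "polya_prob \<alpha> n y z = (if y \<le> z \<and> sum z UNIV = sum y UNIV + n then
     fact n * (\<Prod>c\<in>UNIV. pochhammer (\<alpha> c + real (y c)) (z c - y c) / fact (z c - y c))
       / pochhammer (sum \<alpha> UNIV + real (sum y UNIV)) n else 0)"

lemma polya_prob_nonzeroD:
  "polya_prob \<alpha> n y z \<noteq> 0 \<Longrightarrow> y \<le> z \<and> sum z UNIV = sum y UNIV + n"
  by (auto simp: polya_prob_def split: if_splits)

lemma pmf_polya_draw:
  assumes "\<forall>i. \<alpha> i > 0"
  shows "pmf (polya_draw \<alpha> w) z = (\<Sum>c\<in>UNIV. if w(c := Suc (w c)) = z then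
     (\<alpha> c + real (w c)) / (sum \<alpha> UNIV + real (sum w UNIV)) else 0)"
proof -
  define q where "q c = (\<alpha> c + real (w c)) / (sum \<alpha> UNIV + real (sum w UNIV))" for c
  have "sum \<alpha> UNIV > 0"
    using assms by (simp add: sum_pos)
  then have total_pos: "sum \<alpha> UNIV + real (sum w UNIV) > 0"
    using of_nat_0_le_iff by (rule add_pos_nonneg)
  have q_nonneg: "0 \<le> q c" for c
    unfolding q_def using assms total_pos by (simp add: add_nonneg_nonneg less_imp_le)
  have "sum q UNIV = 1"
    using total_pos by (simp add: q_def sum_divide_distrib[symmetric] sum.distrib)
  then have "(\<integral>\<^sup>+c. ennreal (q c) \<partial>count_space UNIV) = 1"
    by (simp add: nn_integral_count_space_finite q_nonneg)
  then have pmf_q: "pmf (embed_pmf q) c = q c" for c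
    by (rule pmf_embed_pmf[OF q_nonneg])
  have "polya_draw \<alpha> w = map_pmf (\<lambda>c. w(c := w c + 1)) (embed_pmf q)"
    unfolding polya_draw_def q_def ..
  then have "pmf (polya_draw \<alpha> w) z = sum (pmf (embed_pmf q)) {c. w(c := Suc (w c)) = z}"
    by (simp add: pmf_map measure_measure_pmf_finite vimage_def)
  also have "\<dots> = (\<Sum>c\<in>UNIV. if w(c := Suc (w c)) = z then q c else 0)"
    by (simp add: sum.If_cases pmf_q)
  finally show ?thesis
    unfolding q_def .
qed

lemma set_pmf_polya_draw: "set_pmf (polya_draw \<alpha> w) \<subseteq> XN (Suc (sum w UNIV))"
proof -
  have "sum (w(c := w c + 1)) UNIV = Suc (sum w UNIV)" for c
    using sum_fun_upd[of w c "w c + 1"] by simp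
  then show ?thesis
    unfolding polya_draw_def set_map_pmf XN_def by blast
qed

lemma set_pmf_polya_draws: "set_pmf (polya_draws \<alpha> n y) \<subseteq> XN (sum y UNIV + n)"
proof (induction n)
  case (Suc n)
  then show ?case
    using set_pmf_polya_draw[of \<alpha>] by (fastforce simp: XN_iff)
qed (simp add: XN_iff)

lemma pmf_bind_polya_draw:
  assumes "\<forall>i. \<alpha> i > 0" and "finite (set_pmf p)"
  shows "pmf (bind_pmf p (polya_draw \<alpha>)) z = (\<Sum>c\<in>UNIV. if 1 \<le> z c then
     pmf p (z(c := z c - 1)) * ((\<alpha> c + real (z c - 1)) / (sum \<alpha> UNIV + real (sum (z(c := z c - 1)) UNIV)))
     else 0)"
proof -
  define q where "q w c = (\<alpha> c + real (w c)) / (sum \<alpha> UNIV + real (sum w UNIV))" for w c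
  have "pmf (bind_pmf p (polya_draw \<alpha>)) z
      = (\<Sum>w\<in>set_pmf p. \<Sum>c\<in>UNIV. if w(c := Suc (w c)) = z then pmf p w * q w c else 0)"
    by (simp add: pmf_bind_sum[OF assms(2) order_refl] pmf_polya_draw[OF assms(1)] q_def
        sum_distrib_left if_distrib cong: if_cong)
  also have "\<dots> = (\<Sum>c\<in>UNIV. \<Sum>w\<in>set_pmf p. if w = z(c := z c - 1) \<and> 1 \<le> z c then pmf p w * q w c else 0)"
    by (subst sum.swap) (simp add: fun_upd_Suc_eq_iff conj_commute)
  also have "\<dots> = (\<Sum>c\<in>UNIV. if 1 \<le> z c then
     pmf p (z(c := z c - 1)) * ((\<alpha> c + real (z c - 1)) / (sum \<alpha> UNIV + real (sum (z(c := z c - 1)) UNIV)))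
     else 0)"
  proof (rule sum.cong[OF refl])
    fix c
    have "q (z(c := z c - 1)) c
        = (\<alpha> c + real (z c - 1)) / (sum \<alpha> UNIV + real (sum (z(c := z c - 1)) UNIV))"
      by (simp only: q_def fun_upd_same)
    then show "(\<Sum>w\<in>set_pmf p. if w = z(c := z c - 1) \<and> 1 \<le> z c then pmf p w * q w c else 0)
      = (if 1 \<le> z c then pmf p (z(c := z c - 1))
           * ((\<alpha> c + real (z c - 1)) / (sum \<alpha> UNIV + real (sum (z(c := z c - 1)) UNIV))) else 0)"
      by (auto simp: sum.delta[OF assms(2)] set_pmf_iff)
  qed
  finally show ?thesis .
qed

lemma pochhammer_Suc_div_fact:
  fixes a :: real
  shows "pochhammer a j / fact j * (a + real j) = pochhammer a (Suc j) / fact (Suc j) * real (Suc j)"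
  by (simp add: pochhammer_Suc del: of_nat_Suc)

lemma polya_prob_pred_step:
  assumes "y \<le> z" and "sum z UNIV = sum y UNIV + Suc n" and "y c < z c"
  shows "polya_prob \<alpha> n y (z(c := z c - 1))
            * ((\<alpha> c + real (z c - 1)) / (sum \<alpha> UNIV + real (sum (z(c := z c - 1)) UNIV)))
       = real (z c - y c) / real (Suc n) * polya_prob \<alpha> (Suc n) y z"
proof -
  define z' where "z' = z(c := z c - 1)"
  define g where "g i k = pochhammer (\<alpha> i + real (y i)) (k - y i) / fact (k - y i)" for i k
  define R where "R = (\<Prod>i\<in>UNIV - {c}. g i (z i))"
  define S where "S = sum \<alpha> UNIV + real (sum y UNIV)"
  define D where "D = pochhammer S n"
  have z'_sum: "sum z' UNIV = sum y UNIV + n"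
    using sum_fun_upd[of z c "z c - 1"] assms(2,3) by (simp add: z'_def)
  have "y \<le> z'" and "(\<Prod>i\<in>UNIV - {c}. g i (z' i)) = R"
    using assms(1,3) by (auto simp: le_fun_def z'_def R_def intro: prod.cong)
  with z'_sum have P: "polya_prob \<alpha> n y z' = fact n * (g c (z c - 1) * R) / D"
    by (simp add: polya_prob_def g_def D_def S_def prod.remove[of UNIV c] z'_def)
  have P_Suc: "polya_prob \<alpha> (Suc n) y z = fact (Suc n) * (g c (z c) * R) / (D * (S + real n))"
    using assms by (simp add: polya_prob_def g_def R_def D_def S_def prod.remove[of UNIV c] pochhammer_Suc)
  have key: "g c (z c - 1) * (\<alpha> c + real (z c - 1)) = g c (z c) * real (z c - y c)"
  proof -
    define j where "j = z c - y c - 1"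
    have "z c - y c = Suc j" "z c - 1 - y c = j" "\<alpha> c + real (z c - 1) = (\<alpha> c + real (y c)) + real j"
      using assms(3) by (simp_all add: j_def)
    then show ?thesis
      unfolding g_def using pochhammer_Suc_div_fact[of "\<alpha> c + real (y c)" j] by (simp add: add.assoc)
  qed
  have "sum \<alpha> UNIV + real (sum z' UNIV) = S + real n"
    by (simp add: z'_sum S_def)
  then have "polya_prob \<alpha> n y z' * ((\<alpha> c + real (z c - 1)) / (sum \<alpha> UNIV + real (sum z' UNIV)))
      = fact n * (g c (z c - 1) * (\<alpha> c + real (z c - 1))) * R / (D * (S + real n))"
    by (simp add: P)
  also have "\<dots> = real (z c - y c) / real (Suc n) * polya_prob \<alpha> (Suc n) y z"
  proof -
    have "(fact (Suc n) :: real) = real (Suc n) * fact n" by simp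
    then show ?thesis
      unfolding key P_Suc by (simp add: divide_inverse)
  qed
  finally show ?thesis
    by (simp add: z'_def)
qed

lemma polya_prob_Suc_term:
  assumes "y \<le> z" and "sum z UNIV = sum y UNIV + Suc n"
  shows "(if 1 \<le> z c then polya_prob \<alpha> n y (z(c := z c - 1))
            * ((\<alpha> c + real (z c - 1)) / (sum \<alpha> UNIV + real (sum (z(c := z c - 1)) UNIV))) else 0)
       = real (z c - y c) / real (Suc n) * polya_prob \<alpha> (Suc n) y z"
proof (cases "y c < z c")
  case False
  with assms(1) have "z c = y c"
    by (simp add: le_fun_def dual_order.antisym leI)
  then have "\<not> y \<le> z(c := z c - 1)" if "1 \<le> z c"
    using that by (auto simp: le_fun_def dest: spec[of _ c])
  then show ?thesis
    using \<open>z c = y c\<close> polya_prob_nonzeroD by fastforce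
next
  case True
  then show ?thesis
    using polya_prob_pred_step[OF assms True] by simp
qed

lemma polya_prob_Suc:
  "(\<Sum>c\<in>UNIV. if 1 \<le> z c then polya_prob \<alpha> n y (z(c := z c - 1))
      * ((\<alpha> c + real (z c - 1)) / (sum \<alpha> UNIV + real (sum (z(c := z c - 1)) UNIV))) else 0)
   = polya_prob \<alpha> (Suc n) y z"
proof (cases "y \<le> z \<and> sum z UNIV = sum y UNIV + Suc n")
  case True
  then have "(\<Sum>c\<in>UNIV. if 1 \<le> z c then polya_prob \<alpha> n y (z(c := z c - 1))
      * ((\<alpha> c + real (z c - 1)) / (sum \<alpha> UNIV + real (sum (z(c := z c - 1)) UNIV))) else 0)
    = (\<Sum>c\<in>UNIV. real (z c - y c)) / real (Suc n) * polya_prob \<alpha> (Suc n) y z"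
    by (simp only: polya_prob_Suc_term sum_distrib_right sum_divide_distrib)
  also have "(\<Sum>c\<in>UNIV. real (z c - y c)) = real (Suc n)"
    using True by (simp add: sum_diff_fun flip: of_nat_sum)
  finally show ?thesis
    by simp
next
  case False
  have vanish: "polya_prob \<alpha> n y (z(c := z c - 1)) = 0" if "1 \<le> z c" for c
  proof (rule ccontr)
    assume "polya_prob \<alpha> n y (z(c := z c - 1)) \<noteq> 0"
    then have le: "y \<le> z(c := z c - 1)" and sum_eq: "sum (z(c := z c - 1)) UNIV = sum y UNIV + n"
      using polya_prob_nonzeroD by blast+
    have "y i \<le> z i" for i
      using le_funD[OF le, of i] by (cases "i = c") auto
    moreover have "sum (z(c := z c - 1)) UNIV + z c = sum z UNIV + (z c - 1)"
      by (rule sum_fun_upd)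
    ultimately have "y \<le> z \<and> sum z UNIV = sum y UNIV + Suc n"
      using that sum_eq by (simp add: le_funI)
    with False show False ..
  qed
  have "polya_prob \<alpha> (Suc n) y z = 0"
    unfolding polya_prob_def using False by (rule if_not_P)
  then show ?thesis
    using vanish by (simp only:) (intro sum.neutral ballI, simp)
qed

lemma pmf_polya_draws:
  assumes "\<forall>i. \<alpha> i > 0"
  shows "pmf (polya_draws \<alpha> n y) z = polya_prob \<alpha> n y z"
proof (induction n arbitrary: z)
  case 0
  have "y \<le> z \<and> sum z UNIV = sum y UNIV \<longleftrightarrow> z = y"
    using eq_if_le_and_sum_eq by auto
  then show ?case
    by (auto simp: polya_prob_def indicator_def)
next
  case (Suc n)
  have fin: "finite (set_pmf (polya_draws \<alpha> n y))"
    using set_pmf_polya_draws finite_XN by (rule finite_subset)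
  show ?case
    unfolding polya_draws.simps pmf_bind_polya_draw[OF assms fin] Suc.IH by (rule polya_prob_Suc)
qed

lemma pmf_down_up_step:
  assumes "\<forall>i. \<alpha> i > 0" and "x \<in> XN N" and "s \<le> N"
  shows "pmf (down_up_step \<alpha> s x) y
    = (\<Sum>r\<in>XN (N - s). (if r \<le> x then hypergeom_prob s x (\<lambda>c. x c - r c) else 0) * polya_prob \<alpha> s r y)"
proof -
  have "s \<le> sum x UNIV" and "set_pmf (remove_balls s x) \<subseteq> XN (N - s)"
    using assms(2,3) set_pmf_remove_balls[of s x] by (simp_all add: XN_iff)
  then show ?thesis
    unfolding down_up_step_def
    by (simp add: pmf_bind_sum[OF finite_XN] pmf_remove_balls pmf_polya_draws[OF assms(1)])
qed

lemma pmf_up_down_step: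
  assumes "\<forall>i. \<alpha> i > 0" and "x \<in> XN N"
  shows "pmf (up_down_step \<alpha> s x) y
    = (\<Sum>z\<in>XN (N + s). polya_prob \<alpha> s x z * (if y \<le> z then hypergeom_prob s z (\<lambda>c. z c - y c) else 0))"
proof -
  have "set_pmf (polya_draws \<alpha> s x) \<subseteq> XN (N + s)"
    using assms(2) set_pmf_polya_draws[of \<alpha> s x] by (simp add: XN_iff)
  then show ?thesis
    unfolding up_down_step_def
    by (auto simp: pmf_bind_sum[OF finite_XN] pmf_polya_draws[OF assms(1)] pmf_remove_balls XN_iff
        intro!: sum.cong)
qed

lemma level_step_eq:
  "level_step \<alpha> s x = bind_pmf (polya_draws \<alpha> s x) (\<lambda>z. map_pmf (\<lambda>m c. z c - m c) (choose_balls s x))"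
  unfolding level_step_def map_pmf_def by (rule bind_commute_pmf)

lemma pmf_level_step:
  assumes "\<forall>i. \<alpha> i > 0" and "x \<in> XN N" and "s \<le> N"
  shows "pmf (level_step \<alpha> s x) y
    = (\<Sum>z\<in>XN (N + s). polya_prob \<alpha> s x z * (if y \<le> z then hypergeom_prob s x (\<lambda>c. z c - y c) else 0))"
proof -
  have sx: "s \<le> sum x UNIV"
    using assms(2,3) by (simp add: XN_iff)
  have "set_pmf (polya_draws \<alpha> s x) \<subseteq> XN (N + s)"
    using assms(2) set_pmf_polya_draws[of \<alpha> s x] by (simp add: XN_iff)
  then have "pmf (level_step \<alpha> s x) y
      = (\<Sum>z\<in>XN (N + s). polya_prob \<alpha> s x z * pmf (map_pmf (\<lambda>m c. z c - m c) (choose_balls s x)) y)"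
    by (simp add: level_step_eq pmf_bind_sum[OF finite_XN] pmf_polya_draws[OF assms(1)])
  also have "\<dots> = (\<Sum>z\<in>XN (N + s). polya_prob \<alpha> s x z * (if y \<le> z then hypergeom_prob s x (\<lambda>c. z c - y c) else 0))"
  proof (rule sum.cong[OF refl])
    fix z
    show "polya_prob \<alpha> s x z * pmf (map_pmf (\<lambda>m c. z c - m c) (choose_balls s x)) y
        = polya_prob \<alpha> s x z * (if y \<le> z then hypergeom_prob s x (\<lambda>c. z c - y c) else 0)"
    proof (cases "polya_prob \<alpha> s x z = 0")
      case False
      then have "x \<le> z"
        using polya_prob_nonzeroD by blast
      then have "m \<le> z" if "m \<in> set_pmf (choose_balls s x)" for m
        using that set_pmf_choose_balls[OF sx] order_trans by blast
      then show ?thesis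
        by (simp add: pmf_map_diff pmf_choose_balls[OF sx])
    qed simp
  qed
  finally show ?thesis .
qed

lemma DM_eq_prod:
  "x \<in> XN N \<Longrightarrow> DM N \<alpha> x
     = fact N / pochhammer (sum \<alpha> UNIV) N * (\<Prod>i\<in>UNIV. pochhammer (\<alpha> i) (x i) / fact (x i))"
  by (simp add: DM_def prod_dividef mult_ac)

lemma pochhammer_div_fact_split:
  fixes a :: real
  assumes "k \<le> n"
  shows "pochhammer a k / fact k * (pochhammer (a + real k) (n - k) / fact (n - k))
       = pochhammer a n / fact n * real (n choose k)"
proof -
  have "pochhammer a n = pochhammer a k * pochhammer (a + real k) (n - k)"
    using pochhammer_product'[of a k "n - k"] assms by simp
  then show ?thesis
    using assms by (simp add: binomial_fact field_simps)
qed

lemma choose_mult_choose_sym: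
  assumes "x \<le> z" "y \<le> z" "z \<le> x + y"
  shows "(z choose x) * (x choose (z - y)) = (z choose y) * (y choose (z - x))"
proof -
  have "(z choose x) * (x choose (z - y)) = (z choose (z - y)) * (y choose (x + y - z))"
    using choose_mult[of "z - y" x z] assms by simp
  also have "\<dots> = (z choose y) * (y choose (z - x))"
    using assms binomial_symmetric[of y z] binomial_symmetric[of "z - x" y]
    by (simp add: add.commute)
  finally show ?thesis .
qed

lemma level_summand_eq:
  assumes "x \<in> XN N" and "y \<in> XN N" and "x \<le> z" and "y \<le> z" and "\<forall>c. z c \<le> x c + y c"
    and "sum z UNIV = N + s"
  shows "DM N \<alpha> x * (polya_prob \<alpha> s x z * hypergeom_prob s x (\<lambda>c. z c - y c))
    = fact N / pochhammer (sum \<alpha> UNIV) N * (fact s / pochhammer (sum \<alpha> UNIV + real N) s) / real (N choose s)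
      * (\<Prod>i\<in>UNIV. pochhammer (\<alpha> i) (z i) / fact (z i) * real ((z i choose x i) * (x i choose (z i - y i))))"
    (is "_ = ?K * _")
proof -
  have "(\<lambda>c. z c - y c) \<le> x"
    using assms(5) by (simp add: le_fun_def le_diff_conv)
  moreover have "sum (\<lambda>c. z c - y c) UNIV = s"
    using assms by (simp add: sum_diff_fun XN_iff)
  ultimately have "DM N \<alpha> x * (polya_prob \<alpha> s x z * hypergeom_prob s x (\<lambda>c. z c - y c))
    = ?K * (\<Prod>i\<in>UNIV. pochhammer (\<alpha> i) (x i) / fact (x i)
        * (pochhammer (\<alpha> i + real (x i)) (z i - x i) / fact (z i - x i)) * real (x i choose (z i - y i)))"
    using assms
    by (simp add: DM_eq_prod polya_prob_def hypergeom_prob_def XN_iff prod.distrib divide_inverse mult_ac)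
  also have "\<dots> = ?K * (\<Prod>i\<in>UNIV. pochhammer (\<alpha> i) (z i) / fact (z i) * real ((z i choose x i) * (x i choose (z i - y i))))"
  proof (intro arg_cong[where f = "(*) ?K"] prod.cong refl)
    fix i
    have "x i \<le> z i"
      using assms(3) by (rule le_funD)
    then show "pochhammer (\<alpha> i) (x i) / fact (x i)
        * (pochhammer (\<alpha> i + real (x i)) (z i - x i) / fact (z i - x i)) * real (x i choose (z i - y i))
      = pochhammer (\<alpha> i) (z i) / fact (z i) * real ((z i choose x i) * (x i choose (z i - y i)))"
      unfolding pochhammer_div_fact_split[OF \<open>x i \<le> z i\<close>] by simp
  qed
  finally show ?thesis .
qed

lemma level_summand_nonzeroD:
  assumes "x \<in> XN N"
    and "polya_prob \<alpha> s x z * (if y \<le> z then hypergeom_prob s x (\<lambda>c. z c - y c) else 0) \<noteq> 0"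
  shows "x \<le> z \<and> y \<le> z \<and> (\<forall>c. z c \<le> x c + y c) \<and> sum z UNIV = N + s \<and> y \<in> XN N"
proof -
  from assms(2) have p: "polya_prob \<alpha> s x z \<noteq> 0" and "y \<le> z"
    and h: "hypergeom_prob s x (\<lambda>c. z c - y c) \<noteq> 0"
    by (auto split: if_splits)
  with assms(1) have "x \<le> z" "sum z UNIV = N + s" "y \<le> z" "(\<lambda>c. z c - y c) \<le> x"
    "sum (\<lambda>c. z c - y c) UNIV = s"
    using polya_prob_nonzeroD[OF p] hypergeom_prob_nonzeroD[OF h] by (auto simp: XN_iff)
  moreover have "sum y UNIV \<le> sum z UNIV"
    using \<open>y \<le> z\<close> by (simp add: le_fun_def sum_mono)
  ultimately show ?thesis
    by (auto simp: le_fun_def le_diff_conv XN_iff sum_diff_fun)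
qed

lemma level_balance:
  assumes "x \<in> XN N" and "y \<in> XN N"
  shows "DM N \<alpha> x * (polya_prob \<alpha> s x z * (if y \<le> z then hypergeom_prob s x (\<lambda>c. z c - y c) else 0))
       = DM N \<alpha> y * (polya_prob \<alpha> s y z * (if x \<le> z then hypergeom_prob s y (\<lambda>c. z c - x c) else 0))"
proof (cases "x \<le> z \<and> y \<le> z \<and> (\<forall>c. z c \<le> x c + y c) \<and> sum z UNIV = N + s")
  case True
  then have sym: "(z i choose x i) * (x i choose (z i - y i)) = (z i choose y i) * (y i choose (z i - x i))" for i
    by (intro choose_mult_choose_sym) (auto simp: le_fun_def)
  let ?K = "fact N / pochhammer (sum \<alpha> UNIV) N * (fact s / pochhammer (sum \<alpha> UNIV + real N) s) / real (N choose s)"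
  have "DM N \<alpha> x * (polya_prob \<alpha> s x z * hypergeom_prob s x (\<lambda>c. z c - y c))
      = ?K * (\<Prod>i\<in>UNIV. pochhammer (\<alpha> i) (z i) / fact (z i) * real ((z i choose x i) * (x i choose (z i - y i))))"
    using True by (intro level_summand_eq[OF assms]) auto
  also have "\<dots> = ?K * (\<Prod>i\<in>UNIV. pochhammer (\<alpha> i) (z i) / fact (z i) * real ((z i choose y i) * (y i choose (z i - x i))))"
    by (simp only: sym)
  also have "\<dots> = DM N \<alpha> y * (polya_prob \<alpha> s y z * hypergeom_prob s y (\<lambda>c. z c - x c))"
    using True by (intro level_summand_eq[OF assms(2,1), symmetric]) (auto simp: add.commute)
  finally show ?thesis
    using True by simp
next
  case False
  have xyz: "polya_prob \<alpha> s x z * (if y \<le> z then hypergeom_prob s x (\<lambda>c. z c - y c) else 0) = 0"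
    using False level_summand_nonzeroD[OF assms(1)] by blast
  have yxz: "polya_prob \<alpha> s y z * (if x \<le> z then hypergeom_prob s y (\<lambda>c. z c - x c) else 0) = 0"
  proof (rule ccontr)
    assume "polya_prob \<alpha> s y z * (if x \<le> z then hypergeom_prob s y (\<lambda>c. z c - x c) else 0) \<noteq> 0"
    from level_summand_nonzeroD[OF assms(2) this] False show False
      by (auto simp: add.commute)
  qed
  show ?thesis
    unfolding xyz yxz by simp
qed

lemma down_up_summand_nonzeroD:
  assumes "x \<in> XN N"
    and "(if r \<le> x then hypergeom_prob s x (\<lambda>c. x c - r c) else 0) * polya_prob \<alpha> s r y \<noteq> 0"
  shows "r \<le> x \<and> r \<le> y \<and> sum r UNIV + s = N \<and> y \<in> XN N"
proof -
  from assms(2) have "r \<le> x" and h: "hypergeom_prob s x (\<lambda>c. x c - r c) \<noteq> 0"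
    and p: "polya_prob \<alpha> s r y \<noteq> 0"
    by (auto split: if_splits)
  moreover have "sum r UNIV \<le> sum x UNIV"
    using \<open>r \<le> x\<close> by (simp add: le_fun_def sum_mono)
  ultimately show ?thesis
    using assms(1) polya_prob_nonzeroD[OF p] hypergeom_prob_nonzeroD[OF h]
    by (auto simp: XN_iff sum_diff_fun)
qed

lemma down_up_summand_eq:
  assumes "x \<in> XN N" and "y \<in> XN N" and "r \<le> x" and "r \<le> y" and "sum r UNIV + s = N"
  shows "DM N \<alpha> x * (hypergeom_prob s x (\<lambda>c. x c - r c) * polya_prob \<alpha> s r y)
    = fact N / pochhammer (sum \<alpha> UNIV) N / real (N choose s)
        * (fact s / pochhammer (sum \<alpha> UNIV + real (sum r UNIV)) s)
      * (\<Prod>i\<in>UNIV. pochhammer (\<alpha> i) (r i) / fact (r i)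
          * (pochhammer (\<alpha> i + real (r i)) (x i - r i) / fact (x i - r i))
          * (pochhammer (\<alpha> i + real (r i)) (y i - r i) / fact (y i - r i)))"
    (is "_ = ?K * _")
proof -
  have "(\<lambda>c. x c - r c) \<le> x" and "sum (\<lambda>c. x c - r c) UNIV = s"
    using assms by (simp_all add: le_fun_def sum_diff_fun XN_iff)
  then have "DM N \<alpha> x * (hypergeom_prob s x (\<lambda>c. x c - r c) * polya_prob \<alpha> s r y)
    = ?K * (\<Prod>i\<in>UNIV. pochhammer (\<alpha> i) (x i) / fact (x i) * real (x i choose (x i - r i))
        * (pochhammer (\<alpha> i + real (r i)) (y i - r i) / fact (y i - r i)))"
    using assms
    by (simp add: DM_eq_prod polya_prob_def hypergeom_prob_def XN_iff prod.distrib divide_inverse mult_ac)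
  also have "\<dots> = ?K * (\<Prod>i\<in>UNIV. pochhammer (\<alpha> i) (r i) / fact (r i)
          * (pochhammer (\<alpha> i + real (r i)) (x i - r i) / fact (x i - r i))
          * (pochhammer (\<alpha> i + real (r i)) (y i - r i) / fact (y i - r i)))"
  proof (intro arg_cong[where f = "(*) ?K"] prod.cong refl)
    fix i
    have "r i \<le> x i"
      using assms(3) by (rule le_funD)
    then show "pochhammer (\<alpha> i) (x i) / fact (x i) * real (x i choose (x i - r i))
          * (pochhammer (\<alpha> i + real (r i)) (y i - r i) / fact (y i - r i))
        = pochhammer (\<alpha> i) (r i) / fact (r i)
          * (pochhammer (\<alpha> i + real (r i)) (x i - r i) / fact (x i - r i))
          * (pochhammer (\<alpha> i + real (r i)) (y i - r i) / fact (y i - r i))"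
      unfolding pochhammer_div_fact_split[OF \<open>r i \<le> x i\<close>] binomial_symmetric[OF \<open>r i \<le> x i\<close>, symmetric]
      by simp
  qed
  finally show ?thesis .
qed

lemma down_up_balance:
  assumes "x \<in> XN N" and "y \<in> XN N"
  shows "DM N \<alpha> x * ((if r \<le> x then hypergeom_prob s x (\<lambda>c. x c - r c) else 0) * polya_prob \<alpha> s r y)
       = DM N \<alpha> y * ((if r \<le> y then hypergeom_prob s y (\<lambda>c. y c - r c) else 0) * polya_prob \<alpha> s r x)"
proof (cases "r \<le> x \<and> r \<le> y \<and> sum r UNIV + s = N")
  case True
  then show ?thesis
    using down_up_summand_eq[OF assms, of r s \<alpha>] down_up_summand_eq[OF assms(2,1), of r s \<alpha>]
    by (simp add: ac_simps)
next
  case False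
  have xyr: "(if r \<le> x then hypergeom_prob s x (\<lambda>c. x c - r c) else 0) * polya_prob \<alpha> s r y = 0"
    using False down_up_summand_nonzeroD[OF assms(1)] by blast
  have yxr: "(if r \<le> y then hypergeom_prob s y (\<lambda>c. y c - r c) else 0) * polya_prob \<alpha> s r x = 0"
    using False down_up_summand_nonzeroD[OF assms(2)] by blast
  show ?thesis
    unfolding xyr yxr by simp
qed

lemma up_down_summand_nonzeroD:
  assumes "x \<in> XN N"
    and "polya_prob \<alpha> s x z * (if y \<le> z then hypergeom_prob s z (\<lambda>c. z c - y c) else 0) \<noteq> 0"
  shows "x \<le> z \<and> y \<le> z \<and> sum z UNIV = N + s \<and> y \<in> XN N"
proof -
  from assms(2) have p: "polya_prob \<alpha> s x z \<noteq> 0" and "y \<le> z"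
    and h: "hypergeom_prob s z (\<lambda>c. z c - y c) \<noteq> 0"
    by (auto split: if_splits)
  moreover have "sum y UNIV \<le> sum z UNIV"
    using \<open>y \<le> z\<close> by (simp add: le_fun_def sum_mono)
  ultimately show ?thesis
    using assms(1) polya_prob_nonzeroD[OF p] hypergeom_prob_nonzeroD[OF h]
    by (auto simp: XN_iff sum_diff_fun)
qed

lemma up_down_summand_eq:
  assumes "x \<in> XN N" and "y \<in> XN N" and "x \<le> z" and "y \<le> z" and "sum z UNIV = N + s"
  shows "DM N \<alpha> x * (polya_prob \<alpha> s x z * hypergeom_prob s z (\<lambda>c. z c - y c))
    = fact N / pochhammer (sum \<alpha> UNIV) N * (fact s / pochhammer (sum \<alpha> UNIV + real N) s) / real ((N + s) choose s)
      * (\<Prod>i\<in>UNIV. pochhammer (\<alpha> i) (z i) / fact (z i) * real ((z i choose x i) * (z i choose y i)))"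
    (is "_ = ?K * _")
proof -
  have "(\<lambda>c. z c - y c) \<le> z" and "sum (\<lambda>c. z c - y c) UNIV = s"
    using assms by (simp_all add: le_fun_def sum_diff_fun XN_iff)
  then have "DM N \<alpha> x * (polya_prob \<alpha> s x z * hypergeom_prob s z (\<lambda>c. z c - y c))
    = ?K * (\<Prod>i\<in>UNIV. pochhammer (\<alpha> i) (x i) / fact (x i)
        * (pochhammer (\<alpha> i + real (x i)) (z i - x i) / fact (z i - x i)) * real (z i choose (z i - y i)))"
    using assms
    by (simp add: DM_eq_prod polya_prob_def hypergeom_prob_def XN_iff prod.distrib divide_inverse mult_ac)
  also have "\<dots> = ?K * (\<Prod>i\<in>UNIV. pochhammer (\<alpha> i) (z i) / fact (z i) * real ((z i choose x i) * (z i choose y i)))"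
  proof (intro arg_cong[where f = "(*) ?K"] prod.cong refl)
    fix i
    have "x i \<le> z i" "y i \<le> z i"
      using assms(3,4) by (simp_all add: le_funD)
    then show "pochhammer (\<alpha> i) (x i) / fact (x i)
        * (pochhammer (\<alpha> i + real (x i)) (z i - x i) / fact (z i - x i)) * real (z i choose (z i - y i))
      = pochhammer (\<alpha> i) (z i) / fact (z i) * real ((z i choose x i) * (z i choose y i))"
      unfolding pochhammer_div_fact_split[OF \<open>x i \<le> z i\<close>] binomial_symmetric[OF \<open>y i \<le> z i\<close>, symmetric]
      by simp
  qed
  finally show ?thesis .
qed

lemma up_down_balance:
  assumes "x \<in> XN N" and "y \<in> XN N"
  shows "DM N \<alpha> x * (polya_prob \<alpha> s x z * (if y \<le> z then hypergeom_prob s z (\<lambda>c. z c - y c) else 0))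
       = DM N \<alpha> y * (polya_prob \<alpha> s y z * (if x \<le> z then hypergeom_prob s z (\<lambda>c. z c - x c) else 0))"
proof (cases "x \<le> z \<and> y \<le> z \<and> sum z UNIV = N + s")
  case True
  then show ?thesis
    using up_down_summand_eq[OF assms, of z s \<alpha>] up_down_summand_eq[OF assms(2,1), of z s \<alpha>]
    by (simp add: mult.commute)
next
  case False
  have xyz: "polya_prob \<alpha> s x z * (if y \<le> z then hypergeom_prob s z (\<lambda>c. z c - y c) else 0) = 0"
    using False up_down_summand_nonzeroD[OF assms(1)] by blast
  have yxz: "polya_prob \<alpha> s y z * (if x \<le> z then hypergeom_prob s z (\<lambda>c. z c - x c) else 0) = 0"
    using False up_down_summand_nonzeroD[OF assms(2)] by blast
  show ?thesis
    unfolding xyz yxz by simp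
qed

theorem lemma4p4:
  fixes \<alpha> :: "'c::finite \<Rightarrow> real" and N s :: nat
  assumes "CARD('c) \<ge> 2" and "N \<ge> 1" and "\<forall>i. \<alpha> i > 0" and "s \<le> N"
  shows "reversible_chain_on (XN N) (level_step \<alpha> s) (DM N \<alpha>)
       \<and> reversible_chain_on (XN N) (down_up_step \<alpha> s) (DM N \<alpha>)
       \<and> reversible_chain_on (XN N) (up_down_step \<alpha> s) (DM N \<alpha>)"
proof (intro conjI)
  show "reversible_chain_on (XN N) (level_step \<alpha> s) (DM N \<alpha>)"
    by (rule reversible_chain_onI[OF pmf_level_step[OF assms(3) _ assms(4)]])
      (use level_summand_nonzeroD level_balance in blast)+
  show "reversible_chain_on (XN N) (down_up_step \<alpha> s) (DM N \<alpha>)"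
    by (rule reversible_chain_onI[OF pmf_down_up_step[OF assms(3) _ assms(4)]])
      (use down_up_summand_nonzeroD down_up_balance in blast)+
  show "reversible_chain_on (XN N) (up_down_step \<alpha> s) (DM N \<alpha>)"
    by (rule reversible_chain_onI[OF pmf_up_down_step[OF assms(3)]])
      (use up_down_summand_nonzeroD up_down_balance in blast)+
qed

end
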